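(* Let $F$ be a signature on a finite set $V$ that is not logsupermodular, but such that every pinning $F_p$ with $\mathrm{dom}(p)\ne\emptyset$ is logsupermodular. Then there is a configuration $x$ such that $\mathrm{supp}(F)\subseteq\{\mathbf 0,x,\overline{x},\mathbf 1\}$.
   Context: A signature on $V$ is a function $F:\{0,1\}^V\to\mathbb{R}_{\ge0}$; $\mathrm{supp}(F)=\{x:F(x)\ne0\}$. $F$ is logsupermodular if $F(x\wedge y)F(x\vee y)\ge F(x)F(y)$ for all $x,y\in\{0,1\}^V$, where $\wedge,\vee$ are coordinatewise min and max. A partial configuration $p$ is an element of $\{0,1\}^{\mathrm{dom}(p)}$, $\mathrm{dom}(p)\subseteq V$, and the pinning $F_p$ on $V\setminus\mathrm{dom}(p)$ is $F_p(x)=F(x,p)$. $\mathbf 0,\mathbf 1$ are the all-zero and all-one configurations; $\overline{x}_i=1-x_i$. *)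

theory Defs
  imports Complex_Main
begin

text \<open>Configurations on a set W of variables: Boolean assignments, normalised to False outside W.\<close>
definition conf :: "'v set \<Rightarrow> ('v \<Rightarrow> bool) set" where
  "conf W = {x. \<forall>v. v \<notin> W \<longrightarrow> \<not> x v}"

definition meet :: "('v \<Rightarrow> bool) \<Rightarrow> ('v \<Rightarrow> bool) \<Rightarrow> ('v \<Rightarrow> bool)" where
  "meet x y = (\<lambda>v. x v \<and> y v)"

definition join :: "('v \<Rightarrow> bool) \<Rightarrow> ('v \<Rightarrow> bool) \<Rightarrow> ('v \<Rightarrow> bool)" where
  "join x y = (\<lambda>v. x v \<or> y v)"

definition signature :: "'v set \<Rightarrow> (('v \<Rightarrow> bool) \<Rightarrow> real) \<Rightarrow> bool" where
  "signature W F \<longleftrightarrow> (\<forall>x\<in>conf W. F x \<ge> 0)"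

definition logsupermodular :: "'v set \<Rightarrow> (('v \<Rightarrow> bool) \<Rightarrow> real) \<Rightarrow> bool" where
  "logsupermodular W F \<longleftrightarrow>
     (\<forall>x\<in>conf W. \<forall>y\<in>conf W. F (meet x y) * F (join x y) \<ge> F x * F y)"

text \<open>Pinning of F by a partial configuration p with domain D (p \<in> conf D);
  the result is a signature on V - D.\<close>
definition pinning :: "(('v \<Rightarrow> bool) \<Rightarrow> real) \<Rightarrow> 'v set \<Rightarrow> ('v \<Rightarrow> bool) \<Rightarrow> (('v \<Rightarrow> bool) \<Rightarrow> real)" where
  "pinning F D p = (\<lambda>x. F (\<lambda>v. if v \<in> D then p v else x v))"

definition supp :: "'v set \<Rightarrow> (('v \<Rightarrow> bool) \<Rightarrow> real) \<Rightarrow> ('v \<Rightarrow> bool) set" where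
  "supp W F = {x \<in> conf W. F x \<noteq> 0}"

definition zero_conf :: "'v \<Rightarrow> bool" where
  "zero_conf = (\<lambda>v. False)"

definition one_conf :: "'v set \<Rightarrow> 'v \<Rightarrow> bool" where
  "one_conf W = (\<lambda>v. v \<in> W)"

definition flip :: "'v set \<Rightarrow> ('v \<Rightarrow> bool) \<Rightarrow> 'v \<Rightarrow> bool" where
  "flip W x = (\<lambda>v. v \<in> W \<and> \<not> x v)"

end

theory Submission
  imports Defs
begin

(* Pinning a single variable v shows that the logsupermodular
   inequality F a * F b \<le> F (meet a b) * F (join a b) holds for every pair of
   configurations that agree at some variable.  The only pairs left are the
   complementary ones {x, flip V x}, whose meet and join are 0 and 1; so the
   failure of logsupermodularity is a "violation" F 0 * F 1 < F x * F (flip V x).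
   Given a violation at x, any z in the support outside {0, x, flip V x, 1}
   leads to a contradiction: if z sets a variable that x does not, then three
   agreeing-pair inequalities for (x, z), (join x z, flip V x) and
   (meet z x, meet z (flip V x)) multiply to F x * F (flip V x) \<le> F 0 * F 1.
   Otherwise z lies below x and the same argument applies to flip V x, whose
   violation is the same. *)

lemma conf_meet: "a \<in> conf V \<Longrightarrow> b \<in> conf V \<Longrightarrow> meet a b \<in> conf V"
  by (auto simp: conf_def meet_def)

lemma conf_join: "a \<in> conf V \<Longrightarrow> b \<in> conf V \<Longrightarrow> join a b \<in> conf V"
  by (auto simp: conf_def join_def)

lemma conf_flip: "flip V a \<in> conf V"
  by (auto simp: conf_def flip_def)

lemma conf_zero: "zero_conf \<in> conf V"
  by (auto simp: conf_def zero_conf_def)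

lemma conf_one: "one_conf V \<in> conf V"
  by (auto simp: conf_def one_conf_def)

lemma flip_flip: "a \<in> conf V \<Longrightarrow> flip V (flip V a) = a"
  by (auto simp: conf_def flip_def fun_eq_iff)

lemma disagree_everywhere_flip:
  assumes "b \<in> conf V" and "\<forall>v\<in>V. a v \<noteq> b v"
  shows "b = flip V a"
  using assms by (auto simp: conf_def flip_def fun_eq_iff)

lemma meet_flip: "meet a (flip V a) = zero_conf"
  by (auto simp: meet_def flip_def zero_conf_def fun_eq_iff)

lemma join_flip: "a \<in> conf V \<Longrightarrow> join a (flip V a) = one_conf V"
  by (auto simp: conf_def join_def flip_def one_conf_def fun_eq_iff)

lemma pinning_restrict:
  assumes "\<forall>v\<in>D. c v = p v"
  shows "pinning F D p (\<lambda>w. w \<notin> D \<and> c w) = F c"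
proof -
  have "(\<lambda>w. if w \<in> D then p w else (w \<notin> D \<and> c w)) = c"
    using assms by (auto simp: fun_eq_iff)
  thus ?thesis by (simp add: pinning_def)
qed

lemma pinning_lsm_inequality:
  assumes lsm: "logsupermodular (V - D) (pinning F D p)"
    and a: "a \<in> conf V" and b: "b \<in> conf V"
    and extend: "\<forall>v\<in>D. a v = p v \<and> b v = p v"
  shows "F a * F b \<le> F (meet a b) * F (join a b)"
proof -
  define forget where "forget c = (\<lambda>w. w \<notin> D \<and> c w)" for c :: "'a \<Rightarrow> bool"
  have conf_forget: "forget c \<in> conf (V - D)" if "c \<in> conf V" for c
    using that by (auto simp: conf_def forget_def)
  have restore: "pinning F D p (forget c) = F c" if "\<forall>v\<in>D. c v = p v" for c
    using pinning_restrict[OF that] by (simp add: forget_def)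
  have "pinning F D p (forget a) * pinning F D p (forget b)
      \<le> pinning F D p (meet (forget a) (forget b)) * pinning F D p (join (forget a) (forget b))"
    using lsm conf_forget[OF a] conf_forget[OF b] unfolding logsupermodular_def by blast
  moreover have "meet (forget a) (forget b) = forget (meet a b)"
    and "join (forget a) (forget b) = forget (join a b)"
    by (auto simp: forget_def meet_def join_def fun_eq_iff)
  moreover have "\<forall>v\<in>D. meet a b v = p v" "\<forall>v\<in>D. join a b v = p v"
    using extend by (auto simp: meet_def join_def)
  ultimately show ?thesis using extend by (simp add: restore)
qed

definition lsm_on_agreeing_pairs :: "'v set \<Rightarrow> (('v \<Rightarrow> bool) \<Rightarrow> real) \<Rightarrow> bool" where
  "lsm_on_agreeing_pairs V F \<longleftrightarrow>
     (\<forall>a\<in>conf V. \<forall>b\<in>conf V. (\<exists>v\<in>V. a v = b v) \<longrightarrow>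
        F a * F b \<le> F (meet a b) * F (join a b))"

text \<open>Logsupermodularity of all single-variable pinnings already gives the
  inequality for every agreeing pair: pin the common value.\<close>
lemma single_pinnings_lsm_on_agreeing_pairs:
  assumes "\<And>v p. v \<in> V \<Longrightarrow> p \<in> conf {v} \<Longrightarrow> logsupermodular (V - {v}) (pinning F {v} p)"
  shows "lsm_on_agreeing_pairs V F"
  unfolding lsm_on_agreeing_pairs_def
proof (intro ballI impI)
  fix a b assume a: "a \<in> conf V" and b: "b \<in> conf V" and "\<exists>v\<in>V. a v = b v"
  then obtain v where v: "v \<in> V" and ab: "a v = b v" by blast
  define p where "p = (\<lambda>w. w = v \<and> a v)"
  have "p \<in> conf {v}" by (auto simp: conf_def p_def)
  with v have pinned: "logsupermodular (V - {v}) (pinning F {v} p)" by (rule assms)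
  have "\<forall>w\<in>{v}. a w = p w \<and> b w = p w" using ab by (simp add: p_def)
  with pinned a b show "F a * F b \<le> F (meet a b) * F (join a b)"
    by (rule pinning_lsm_inequality)
qed

lemma complementary_violation:
  assumes "lsm_on_agreeing_pairs V F" and "\<not> logsupermodular V F"
  obtains x where "x \<in> conf V" "F zero_conf * F (one_conf V) < F x * F (flip V x)"
proof -
  obtain a b where a: "a \<in> conf V" and b: "b \<in> conf V"
    and viol: "F (meet a b) * F (join a b) < F a * F b"
    using assms(2) unfolding logsupermodular_def by (auto simp: not_le)
  have "\<not> (\<exists>v\<in>V. a v = b v)"
  proof
    assume agree: "\<exists>v\<in>V. a v = b v"
    have "F a * F b \<le> F (meet a b) * F (join a b)"
      using assms(1) a b agree by (simp add: lsm_on_agreeing_pairs_def)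
    with viol show False by simp
  qed
  hence "b = flip V a" by (intro disagree_everywhere_flip[OF b]) blast
  with viol a have "F zero_conf * F (one_conf V) < F a * F (flip V a)"
    by (simp add: meet_flip join_flip)
  with a show ?thesis by (rule that)
qed

lemma product_chain_contradiction:
  fixes X Y Z S J T Zero One :: real
  assumes nonneg: "0 \<le> X" "0 \<le> Y" "0 \<le> S" "0 \<le> J" "0 \<le> T" "0 \<le> Zero" "0 \<le> One"
    and Z: "0 < Z"
    and i1: "X * Z \<le> S * J" and i2: "J * Y \<le> T * One" and i3: "S * T \<le> Zero * Z"
    and violation: "Zero * One < X * Y"
  shows False
proof -
  have "0 < X * Y" using violation nonneg by (smt (verit) mult_nonneg_nonneg)
  hence "0 < X" using nonneg by (metis less_eq_real_def mult_zero_left)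
  hence "0 < S * J" using i1 Z by (smt (verit) mult_pos_pos)
  hence J: "0 < J" using nonneg by (metis less_eq_real_def mult_zero_right)
  have "(X * Y) * (Z * J) = (X * Z) * (J * Y)" by simp
  also have "\<dots> \<le> (S * J) * (T * One)"
    using i1 i2 by (rule mult_mono) (use nonneg Z in auto)
  also have "\<dots> = (S * T) * (J * One)" by simp
  also have "\<dots> \<le> (Zero * Z) * (J * One)"
    by (rule mult_right_mono[OF i3]) (use nonneg in simp)
  also have "\<dots> = (Zero * One) * (Z * J)" by simp
  finally have "X * Y \<le> Zero * One" using Z J by (simp add: mult_le_cancel_right_pos)
  thus False using violation by simp
qed

lemma support_escaping_x_impossible:
  assumes nonneg: "signature V F" and lsm: "lsm_on_agreeing_pairs V F"
    and x: "x \<in> conf V" and viol: "F zero_conf * F (one_conf V) < F x * F (flip V x)"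
    and z: "z \<in> supp V F" and z_not_flip: "z \<noteq> flip V x" and z_not_one: "z \<noteq> one_conf V"
    and escapes: "\<exists>v\<in>V. z v \<and> \<not> x v"
  shows False
proof -
  have zc: "z \<in> conf V" and "F z \<noteq> 0" using z by (auto simp: supp_def)
  define s where "s = meet z x"
  define j where "j = join x z"
  define t where "t = meet z (flip V x)"
  have sc: "s \<in> conf V" and jc: "j \<in> conf V" and tc: "t \<in> conf V"
    using x zc conf_flip by (auto simp: s_def j_def t_def intro: conf_meet conf_join)
  have ineq: "F a * F b \<le> F (meet a b) * F (join a b)"
    if "a \<in> conf V" "b \<in> conf V" "\<exists>v\<in>V. a v = b v" for a b
    using lsm that by (simp add: lsm_on_agreeing_pairs_def)
  have "\<exists>v\<in>V. x v = z v"
    using zc z_not_flip disagree_everywhere_flip by metis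
  hence i1: "F x * F z \<le> F s * F j"
    using ineq[OF x zc] by (simp add: s_def j_def meet_def join_def conj_commute)
  have "\<exists>v\<in>V. j v = flip V x v" using escapes by (auto simp: j_def join_def flip_def)
  moreover have "meet j (flip V x) = t" "join j (flip V x) = one_conf V"
    using x zc by (auto simp: j_def t_def conf_def meet_def join_def flip_def one_conf_def fun_eq_iff)
  ultimately have i2: "F j * F (flip V x) \<le> F t * F (one_conf V)"
    using ineq[OF jc conf_flip[of V x]] by simp
  obtain v where "v \<in> V" "\<not> z v"
    using zc z_not_one by (auto simp: conf_def one_conf_def fun_eq_iff)
  hence "\<exists>v\<in>V. s v = t v" by (auto simp: s_def t_def meet_def)
  moreover have "meet s t = zero_conf" "join s t = z"
    using zc by (auto simp: s_def t_def conf_def meet_def join_def flip_def zero_conf_def fun_eq_iff)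
  ultimately have i3: "F s * F t \<le> F zero_conf * F z"
    using ineq[OF sc tc] by simp
  have pos: "0 \<le> F c" if "c \<in> conf V" for c
    using nonneg that by (simp add: signature_def)
  have "0 < F z" using pos[OF zc] \<open>F z \<noteq> 0\<close> by linarith
  then show False
    using product_chain_contradiction[OF pos[OF x] pos[OF conf_flip] pos[OF sc] pos[OF jc]
        pos[OF tc] pos[OF conf_zero] pos[OF conf_one] _ i1 i2 i3 viol] by blast
qed

text \<open>A violation at x confines the support to {0, x, flip V x, 1}: configurations
  setting a variable outside x are excluded directly, those below x by applying
  the same argument to flip V x, which carries the same violation.\<close>
lemma support_in_four:
  assumes nonneg: "signature V F" and lsm: "lsm_on_agreeing_pairs V F"
    and x: "x \<in> conf V" and viol: "F zero_conf * F (one_conf V) < F x * F (flip V x)"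
  shows "supp V F \<subseteq> {zero_conf, x, flip V x, one_conf V}"
proof
  fix z assume z: "z \<in> supp V F"
  show "z \<in> {zero_conf, x, flip V x, one_conf V}"
  proof (rule ccontr)
    assume out: "z \<notin> {zero_conf, x, flip V x, one_conf V}"
    show False
    proof (cases "\<exists>v\<in>V. z v \<and> \<not> x v")
      case True
      with out show False using support_escaping_x_impossible[OF nonneg lsm x viol z] by blast
    next
      case False
      have viol': "F zero_conf * F (one_conf V) < F (flip V x) * F (flip V (flip V x))"
        using viol flip_flip[OF x] by (simp add: mult.commute)
      have "z \<in> conf V" using z by (simp add: supp_def)
      with False out have "\<exists>v\<in>V. z v \<and> \<not> flip V x v"
        by (auto simp: conf_def flip_def zero_conf_def fun_eq_iff)
      with out show False
        using support_escaping_x_impossible[OF nonneg lsm conf_flip viol' z] flip_flip[OF x] by auto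
    qed
  qed
qed

theorem mainTheorem8:
  fixes V :: "'v set" and F :: "('v \<Rightarrow> bool) \<Rightarrow> real"
  assumes "finite V"
    and "signature V F"
    and "\<not> logsupermodular V F"
    and "\<And>D p. D \<subseteq> V \<Longrightarrow> D \<noteq> {} \<Longrightarrow> p \<in> conf D \<Longrightarrow>
           logsupermodular (V - D) (pinning F D p)"
  shows "\<exists>x\<in>conf V. supp V F \<subseteq> {zero_conf, x, flip V x, one_conf V}"
proof -
  have lsm: "lsm_on_agreeing_pairs V F"
    by (rule single_pinnings_lsm_on_agreeing_pairs) (simp add: assms(4))
  obtain x where "x \<in> conf V" "F zero_conf * F (one_conf V) < F x * F (flip V x)"
    using complementary_violation[OF lsm assms(3)] by blast
  with support_in_four[OF assms(2) lsm] show ?thesis by blast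
qed

end
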